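(* Let $p$ be an odd prime. There is a constant $C$ (independent of $n$ and of the function below) such that for all sufficiently large $n$ the following holds. For every $j:\mathbb{F}_{p^n}\to[0,1]$ there exists $j_2:\mathbb{F}_{p^n}\to\{0,1\}$ such that $\mathbb{E}(j_2)\ge\mathbb{E}(j)$, $|\Lambda_3(j_2)-\Lambda_3(j)|\le C p^{-n/3}$, and for every subspace $W$ of $\mathbb{F}_{p^n}$ of codimension at most $n^{1/2}$ and every $m\in\mathbb{F}_{p^n}$, $$|(j_2)_W(m)-j_W(m)|\le C/n.$$ (In the paper's notation: $\Lambda_3(j_2)=\Lambda_3(j)+O(p^{-n/3})$ and $(j_2)_W(m)=j_W(m)+O(1/n)$.)
   Context: $\mathbb{F}_{p^n}$ is regarded as an $n$-dimensional vector space over $\mathbb{F}_p$; "subspace" means $\mathbb{F}_p$-subspace. $\mathbb{E}(g)=p^{-n}\sum_m g(m)$; $\Lambda_3(f)=p^{-2n}\sum_{m,d} f(m)f(m+d)f(m+2d)$; for a subspace $W$, $f_W(m)=|W|^{-1}\sum_{w\in W} f(m+w)$. *)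

theory Defs
  imports "HOL-Computational_Algebra.Primes" Complex_Main
begin

text \<open>F_{p^n} as an n-dimensional F_p-vector space: vectors are functions
  nat => nat with coordinates in {0..<p} for i < n and 0 for i >= n.\<close>

definition V :: "nat \<Rightarrow> nat \<Rightarrow> (nat \<Rightarrow> nat) set" where
  "V p n = {x. \<forall>i. (i < n \<longrightarrow> x i < p) \<and> (n \<le> i \<longrightarrow> x i = 0)}"

definition vadd :: "nat \<Rightarrow> (nat \<Rightarrow> nat) \<Rightarrow> (nat \<Rightarrow> nat) \<Rightarrow> (nat \<Rightarrow> nat)" where
  "vadd p x y = (\<lambda>i. (x i + y i) mod p)"

definition smul :: "nat \<Rightarrow> nat \<Rightarrow> (nat \<Rightarrow> nat) \<Rightarrow> (nat \<Rightarrow> nat)" where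
  "smul p c x = (\<lambda>i. (c * x i) mod p)"

definition is_subspace :: "nat \<Rightarrow> nat \<Rightarrow> (nat \<Rightarrow> nat) set \<Rightarrow> bool" where
  "is_subspace p n W \<longleftrightarrow> W \<subseteq> V p n \<and> (\<lambda>_. 0) \<in> W \<and>
     (\<forall>x\<in>W. \<forall>y\<in>W. vadd p x y \<in> W) \<and> (\<forall>c<p. \<forall>x\<in>W. smul p c x \<in> W)"

definition codim :: "nat \<Rightarrow> nat \<Rightarrow> (nat \<Rightarrow> nat) set \<Rightarrow> real" where
  "codim p n W = real n - log (real p) (real (card W))"

definition Ex :: "nat \<Rightarrow> nat \<Rightarrow> ((nat \<Rightarrow> nat) \<Rightarrow> real) \<Rightarrow> real" where
  "Ex p n g = (\<Sum>m\<in>V p n. g m) / real p ^ n"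

definition Lambda3 :: "nat \<Rightarrow> nat \<Rightarrow> ((nat \<Rightarrow> nat) \<Rightarrow> real) \<Rightarrow> real" where
  "Lambda3 p n f = (\<Sum>m\<in>V p n. \<Sum>d\<in>V p n.
      f m * f (vadd p m d) * f (vadd p m (vadd p d d))) / real p ^ (2 * n)"

definition avgW :: "nat \<Rightarrow> (nat \<Rightarrow> nat) set \<Rightarrow> ((nat \<Rightarrow> nat) \<Rightarrow> real) \<Rightarrow> (nat \<Rightarrow> nat) \<Rightarrow> real" where
  "avgW p W f m = (\<Sum>w\<in>W. f (vadd p m w)) / real (card W)"

end

theory Submission
  imports Defs "HOL-Number_Theory.Cong" "HOL-Probability.Product_PMF" "HOL-Real_Asymp.Real_Asymp"
begin

text \<open>
  Round \<open>j\<close> randomly: put each point \<open>m\<close> into a set \<open>X\<close> independently with probability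
  \<open>j m\<close>. Second-moment computations give an outcome \<open>X\<close> for which the size of \<open>X\<close> differs
  from \<open>\<Sum>j\<close> by \<open>O(p^(n/2))\<close>, the number of three-term progressions in \<open>X\<close> differs from
  its mean by \<open>O(p^(3n/2))\<close> (the mean is \<open>p^(2n) \<Lambda>\<^sub>3(j)\<close> up to the \<open>p^n\<close> trivial
  progressions), and the centred indicator \<open>f = 1\<^sub>X - j\<close> has bounded energy
  \<open>\<Sum>\<^sub>u (E\<^sub>m f(m) f(m+u))\<^sup>2\<close>. By Cauchy-Schwarz the energy bound makes the average of \<open>f\<close>
  over any coset of a subspace \<open>W\<close> at most \<open>(p^(2n) / |W|\<^sup>3)^(1/4)\<close>, which is tiny when
  \<open>|W| \<ge> p^(n - \<surd>n)\<close>. Finally \<open>O(p^(n/2))\<close> points are added to \<open>X\<close> to restore the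
  density; this moves \<open>\<Lambda>\<^sub>3\<close> by \<open>O(p^(-n/2))\<close> and every \<open>W\<close>-average by \<open>O(p^(n/2)/|W|)\<close>.
\<close>

section \<open>Arithmetic in \<open>F\<^sub>p\<^sup>n\<close>\<close>

definition vzero :: "nat \<Rightarrow> nat" where
  "vzero = (\<lambda>_. 0)"

definition vneg :: "nat \<Rightarrow> (nat \<Rightarrow> nat) \<Rightarrow> nat \<Rightarrow> nat" where
  "vneg p x = smul p (p - 1) x"

lemma V_eq_PiE_dflt: "V p n = PiE_dflt {..<n} 0 (\<lambda>_. {..<p})"
  by (rule set_eqI) (simp add: V_def PiE_dflt_def not_less)

lemma card_V: "card (V p n) = p ^ n"
  unfolding V_eq_PiE_dflt by (subst card_PiE_dflt) auto

lemma finite_V: "p > 0 \<Longrightarrow> finite (V p n)"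
  unfolding V_eq_PiE_dflt by (intro finite_PiE_dflt) auto

lemma V_coord_less: "p > 0 \<Longrightarrow> x \<in> V p n \<Longrightarrow> x i < p"
  by (cases "i < n") (auto simp: V_def)

lemma vadd_in_V: "p > 0 \<Longrightarrow> x \<in> V p n \<Longrightarrow> y \<in> V p n \<Longrightarrow> vadd p x y \<in> V p n"
  by (auto simp: V_def vadd_def)

lemma vneg_in_V: "p > 0 \<Longrightarrow> x \<in> V p n \<Longrightarrow> vneg p x \<in> V p n"
  by (auto simp: V_def vneg_def smul_def)

lemma vzero_in_V: "p > 0 \<Longrightarrow> vzero \<in> V p n"
  by (auto simp: V_def vzero_def)

lemma vadd_commute: "vadd p x y = vadd p y x"
  by (simp add: vadd_def add.commute)

lemma vadd_assoc: "vadd p (vadd p x y) z = vadd p x (vadd p y z)"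
  by (simp add: vadd_def mod_add_left_eq mod_add_right_eq add.assoc)

lemma vadd_left_commute: "vadd p x (vadd p y z) = vadd p y (vadd p x z)"
  by (metis vadd_assoc vadd_commute)

lemmas vadd_ac = vadd_assoc vadd_commute vadd_left_commute

lemma vadd_vzero: "p > 0 \<Longrightarrow> x \<in> V p n \<Longrightarrow> vadd p x vzero = x"
  by (simp add: vadd_def vzero_def fun_eq_iff V_coord_less)

lemma vadd_vneg: "p > 0 \<Longrightarrow> vadd p x (vneg p x) = vzero"
  by (auto simp: vadd_def vneg_def smul_def vzero_def fun_eq_iff mod_add_right_eq
      simp flip: mult_Suc elim!: gr0_implies_Suc)

lemma vadd_vneg_cancel:
  "p > 0 \<Longrightarrow> x \<in> V p n \<Longrightarrow> vadd p (vadd p x a) (vneg p a) = x"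
  by (simp add: vadd_assoc vadd_vneg vadd_vzero)

lemma vadd_right_cancel:
  assumes "p > 0" "x \<in> V p n" "y \<in> V p n" "vadd p x a = vadd p y a"
  shows "x = y"
  by (metis assms vadd_vneg_cancel)

lemma vadd_eq_self_imp_vzero:
  assumes "p > 0" "m \<in> V p n" "u \<in> V p n" "vadd p m u = m"
  shows "u = vzero"
  using vadd_right_cancel[of p u n vzero m] assms vadd_vzero[of p m n]
  by (simp add: vadd_commute vzero_in_V)

lemma bij_betw_vadd: "p > 0 \<Longrightarrow> a \<in> V p n \<Longrightarrow> bij_betw (\<lambda>m. vadd p m a) (V p n) (V p n)"
  by (rule bij_betw_byWitness[where f' = "\<lambda>m. vadd p m (vneg p a)"])
    (auto simp: vadd_vneg_cancel vadd_in_V vneg_in_V vadd_assoc vadd_commute[of p "vneg p a"]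
      vadd_vneg vadd_vzero)

lemma vadd_double_inj:
  assumes "prime p" "odd p"
  shows "inj_on (\<lambda>d. vadd p d d) (V p n)"
proof (rule inj_onI)
  fix x y assume x: "x \<in> V p n" and y: "y \<in> V p n" and eq: "vadd p x x = vadd p y y"
  have p: "p > 0" using assms(1) prime_gt_0_nat by blast
  have "coprime 2 p"
    using assms by (metis prime_imp_coprime two_is_prime_nat)
  show "x = y"
  proof
    fix i
    have "2 * x i mod p = 2 * y i mod p"
      using eq by (simp add: vadd_def fun_eq_iff mult_2)
    hence "x i mod p = y i mod p"
      using \<open>coprime 2 p\<close> cong_mult_lcancel_nat[of 2 p "x i" "y i"] unfolding Cong.cong_def by simp
    thus "x i = y i"
      using V_coord_less[OF p x] V_coord_less[OF p y] by simp
  qed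
qed

lemma vadd_double_eq_vzero:
  assumes "prime p" "odd p" "d \<in> V p n" "vadd p d d = vzero"
  shows "d = vzero"
proof -
  have "p > 0" using assms(1) prime_gt_0_nat by blast
  hence "vadd p vzero vzero = vzero" by (simp add: vadd_def vzero_def)
  thus ?thesis
    using inj_onD[OF vadd_double_inj[OF assms(1,2)]] assms(3,4) vzero_in_V[OF \<open>p > 0\<close>] by metis
qed

lemma bij_betw_vadd_double:
  assumes "prime p" "odd p" "m \<in> V p n"
  shows "bij_betw (\<lambda>d. vadd p m (vadd p d d)) (V p n) (V p n)"
proof -
  have p: "p > 0" using assms(1) prime_gt_0_nat by blast
  have "(\<lambda>d. vadd p d d) ` V p n = V p n"
    by (rule endo_inj_surj[OF finite_V[OF p] _ vadd_double_inj[OF assms(1,2)]])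
      (auto intro: vadd_in_V[OF p])
  hence "bij_betw (\<lambda>d. vadd p d d) (V p n) (V p n)"
    using vadd_double_inj[OF assms(1,2)] by (simp add: bij_betw_def)
  from bij_betw_trans[OF this bij_betw_vadd[OF p assms(3)]] show ?thesis
    by (simp add: o_def vadd_commute)
qed

lemma sum_V_vadd:
  "p > 0 \<Longrightarrow> a \<in> V p n \<Longrightarrow> (\<Sum>m\<in>V p n. f (vadd p m a)) = (\<Sum>m\<in>V p n. f m)"
  using sum.reindex_bij_betw[OF bij_betw_vadd] .

lemma sum_V_vadd_double:
  "prime p \<Longrightarrow> odd p \<Longrightarrow> m \<in> V p n \<Longrightarrow>
    (\<Sum>d\<in>V p n. f (vadd p m (vadd p d d))) = (\<Sum>d\<in>V p n. f d)"
  using sum.reindex_bij_betw[OF bij_betw_vadd_double] .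

lemma subspace_subset_V: "is_subspace p n W \<Longrightarrow> W \<subseteq> V p n"
  by (simp add: is_subspace_def)

lemma vadd_in_subspace: "is_subspace p n W \<Longrightarrow> x \<in> W \<Longrightarrow> y \<in> W \<Longrightarrow> vadd p x y \<in> W"
  by (simp add: is_subspace_def)

lemma vneg_in_subspace: "p > 0 \<Longrightarrow> is_subspace p n W \<Longrightarrow> x \<in> W \<Longrightarrow> vneg p x \<in> W"
  by (simp add: is_subspace_def vneg_def)

lemma finite_subspace: "p > 0 \<Longrightarrow> is_subspace p n W \<Longrightarrow> finite W"
  using finite_subset[OF subspace_subset_V finite_V] .

lemma card_subspace_pos: "p > 0 \<Longrightarrow> is_subspace p n W \<Longrightarrow> card W > 0"
  using finite_subspace[of p n W] by (auto simp: card_gt_0_iff is_subspace_def)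

lemma sum_subspace_vadd:
  assumes p: "p > 0" and W: "is_subspace p n W" and a: "a \<in> W"
  shows "(\<Sum>w\<in>W. f (vadd p a w)) = (\<Sum>w\<in>W. f w)"
proof (rule sum.reindex_bij_betw, rule bij_betw_byWitness[where f' = "vadd p (vneg p a)"])
  have "vadd p (vneg p a) (vadd p a x) = x \<and> vadd p a (vadd p (vneg p a) x) = x" if "x \<in> W" for x
    using vadd_vneg_cancel[OF p, of x n a] subspace_subset_V[OF W] that by (auto simp only: vadd_ac)
  thus "\<forall>x\<in>W. vadd p (vneg p a) (vadd p a x) = x" "\<forall>y\<in>W. vadd p a (vadd p (vneg p a) y) = y"
    by auto
  show "vadd p a ` W \<subseteq> W" "vadd p (vneg p a) ` W \<subseteq> W"
    using vadd_in_subspace[OF W] vneg_in_subspace[OF p W] a by auto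
qed

section \<open>Averages over subspaces\<close>

definition autocorr :: "nat \<Rightarrow> nat \<Rightarrow> ((nat \<Rightarrow> nat) \<Rightarrow> real) \<Rightarrow> (nat \<Rightarrow> nat) \<Rightarrow> real" where
  "autocorr p n f u = (\<Sum>m\<in>V p n. f m * f (vadd p m u)) / real p ^ n"

text \<open>\<open>autocorr_energy p n f\<close> is \<open>p^n\<close> times the fourth power of the \<open>U\<^sup>2\<close>-norm of \<open>f\<close>.\<close>

definition autocorr_energy :: "nat \<Rightarrow> nat \<Rightarrow> ((nat \<Rightarrow> nat) \<Rightarrow> real) \<Rightarrow> real" where
  "autocorr_energy p n f = (\<Sum>u\<in>V p n. (autocorr p n f u)\<^sup>2)"

lemma avgW_vadd_subspace:
  "p > 0 \<Longrightarrow> is_subspace p n W \<Longrightarrow> w \<in> W \<Longrightarrow> avgW p W f (vadd p m w) = avgW p W f m"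
  using sum_subspace_vadd[of p n W w "\<lambda>x. f (vadd p m x)"] by (simp add: avgW_def vadd_assoc)

lemma inj_on_vadd: "p > 0 \<Longrightarrow> m \<in> V p n \<Longrightarrow> inj_on (vadd p m) (V p n)"
  by (rule inj_onI) (metis vadd_commute vadd_right_cancel)

lemma card_mult_avgW_sq_le:
  assumes p: "p > 0" and W: "is_subspace p n W" and m0: "m0 \<in> V p n"
  shows "card W * (avgW p W f m0)\<^sup>2 \<le> (\<Sum>m\<in>V p n. (avgW p W f m)\<^sup>2)"
proof -
  have WV: "W \<subseteq> V p n" using subspace_subset_V[OF W] .
  have "card W * (avgW p W f m0)\<^sup>2 = (\<Sum>w\<in>W. (avgW p W f (vadd p m0 w))\<^sup>2)"
    by (simp add: avgW_vadd_subspace[OF p W])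
  also have "\<dots> = (\<Sum>m\<in>vadd p m0 ` W. (avgW p W f m)\<^sup>2)"
    using inj_on_subset[OF inj_on_vadd[OF p m0] WV] by (simp add: sum.reindex)
  also have "\<dots> \<le> (\<Sum>m\<in>V p n. (avgW p W f m)\<^sup>2)"
    using WV m0 vadd_in_V[OF p] by (intro sum_mono2[OF finite_V[OF p]]) auto
  finally show ?thesis .
qed

lemma sum_vadd_mult_vadd:
  assumes p: "p > 0" and w: "w \<in> V p n" and w': "w' \<in> V p n"
  shows "(\<Sum>m\<in>V p n. f (vadd p m w) * f (vadd p m w')) = real p ^ n * autocorr p n f (vadd p (vneg p w) w')"
proof -
  have shift: "vadd p (vadd p m w) (vadd p (vneg p w) w') = vadd p m w'" if "m \<in> V p n" for m
  proof -
    have "vadd p (vadd p m w) (vadd p (vneg p w) w') = vadd p (vadd p (vadd p m w') w) (vneg p w)"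
      by (simp only: vadd_ac)
    also have "\<dots> = vadd p m w'"
      using vadd_vneg_cancel[OF p vadd_in_V[OF p that w']] .
    finally show ?thesis .
  qed
  have "(\<Sum>m\<in>V p n. f m * f (vadd p m (vadd p (vneg p w) w')))
      = (\<Sum>m\<in>V p n. f (vadd p m w) * f (vadd p (vadd p m w) (vadd p (vneg p w) w')))"
    by (rule sum_V_vadd[OF p w, symmetric])
  also have "\<dots> = (\<Sum>m\<in>V p n. f (vadd p m w) * f (vadd p m w'))"
    by (intro sum.cong) (simp_all add: shift)
  finally show ?thesis using p by (simp add: autocorr_def)
qed

lemma sum_avgW_sq:
  assumes p: "p > 0" and W: "is_subspace p n W"
  shows "(\<Sum>m\<in>V p n. (avgW p W f m)\<^sup>2) = real p ^ n / card W * (\<Sum>u\<in>W. autocorr p n f u)"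
proof -
  have WV: "W \<subseteq> V p n" using subspace_subset_V[OF W] .
  have "(\<Sum>m\<in>V p n. (\<Sum>w\<in>W. f (vadd p m w))\<^sup>2)
      = (\<Sum>w\<in>W. \<Sum>w'\<in>W. \<Sum>m\<in>V p n. f (vadd p m w) * f (vadd p m w'))"
    by (simp add: power2_eq_square sum_product sum.swap[of _ "V p n"])
  also have "\<dots> = (\<Sum>w\<in>W. \<Sum>w'\<in>W. real p ^ n * autocorr p n f (vadd p (vneg p w) w'))"
    using WV by (intro sum.cong refl sum_vadd_mult_vadd[OF p]) auto
  also have "\<dots> = card W * (real p ^ n * (\<Sum>u\<in>W. autocorr p n f u))"
    by (simp add: sum_subspace_vadd[OF p W] vneg_in_subspace[OF p W] sum_distrib_left[symmetric])
  finally show ?thesis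
    using card_subspace_pos[OF p W]
    by (simp add: avgW_def power_divide sum_divide_distrib[symmetric] power2_eq_square)
qed

lemma avgW_pow4_le:
  assumes p: "p > 0" and W: "is_subspace p n W" and m0: "m0 \<in> V p n"
  shows "(avgW p W f m0) ^ 4 \<le> (real p ^ n)\<^sup>2 * autocorr_energy p n f / card W ^ 3"
proof -
  define K where "K = real (card W)"
  define S where "S = (\<Sum>u\<in>W. autocorr p n f u)"
  have K: "K > 0" using card_subspace_pos[OF p W] by (simp add: K_def)
  have "K * (avgW p W f m0)\<^sup>2 \<le> real p ^ n / K * S"
    using card_mult_avgW_sq_le[OF p W m0] sum_avgW_sq[OF p W] by (simp add: K_def S_def)
  hence avg_sq: "(avgW p W f m0)\<^sup>2 \<le> real p ^ n / K\<^sup>2 * S"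
    using K by (simp add: field_simps power2_eq_square)
  have "S\<^sup>2 \<le> K * (\<Sum>u\<in>W. (autocorr p n f u)\<^sup>2)"
    unfolding S_def K_def by (metis mult.commute sum_squared_le_sum_of_squares)
  also have "\<dots> \<le> K * autocorr_energy p n f"
    unfolding autocorr_energy_def using K subspace_subset_V[OF W]
    by (intro mult_left_mono sum_mono2[OF finite_V[OF p]]) auto
  finally have S_sq: "S\<^sup>2 \<le> K * autocorr_energy p n f" .
  have "(avgW p W f m0) ^ 4 = ((avgW p W f m0)\<^sup>2)\<^sup>2" by simp
  also have "\<dots> \<le> (real p ^ n / K\<^sup>2 * S)\<^sup>2"
    by (intro power_mono avg_sq) simp
  also have "\<dots> = (real p ^ n)\<^sup>2 / K ^ 4 * S\<^sup>2"
    by (simp add: power_mult_distrib power_divide)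
  also have "\<dots> \<le> (real p ^ n)\<^sup>2 / K ^ 4 * (K * autocorr_energy p n f)"
    by (intro mult_left_mono S_sq) simp
  also have "\<dots> = (real p ^ n)\<^sup>2 * autocorr_energy p n f / K ^ 3"
    using K by (simp add: field_simps power_eq_if)
  finally show ?thesis by (simp add: K_def)
qed

lemma avgW_diff_le:
  assumes p: "p > 0" and W: "is_subspace p n W" and m: "m \<in> V p n"
  shows "\<bar>avgW p W g m - avgW p W h m\<bar> \<le> (\<Sum>x\<in>V p n. \<bar>g x - h x\<bar>) / card W"
proof -
  have WV: "W \<subseteq> V p n" using subspace_subset_V[OF W] .
  have "\<bar>avgW p W g m - avgW p W h m\<bar> = \<bar>\<Sum>w\<in>W. g (vadd p m w) - h (vadd p m w)\<bar> / card W"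
    by (simp add: avgW_def abs_divide sum_subtractf flip: diff_divide_distrib)
  also have "\<dots> \<le> (\<Sum>x\<in>vadd p m ` W. \<bar>g x - h x\<bar>) / card W"
    using inj_on_subset[OF inj_on_vadd[OF p m] WV]
    by (intro divide_right_mono) (simp_all add: sum.reindex sum_abs)
  also have "\<dots> \<le> (\<Sum>x\<in>V p n. \<bar>g x - h x\<bar>) / card W"
    using WV m vadd_in_V[OF p]
    by (intro divide_right_mono sum_mono2[OF finite_V[OF p]]) auto
  finally show ?thesis .
qed

lemma abs_triple_prod_diff_le:
  fixes a b c a' b' c' :: real
  assumes "\<bar>b\<bar> \<le> 1" "\<bar>c\<bar> \<le> 1" "\<bar>a'\<bar> \<le> 1" "\<bar>b'\<bar> \<le> 1"
  shows "\<bar>a * b * c - a' * b' * c'\<bar> \<le> \<bar>a - a'\<bar> + \<bar>b - b'\<bar> + \<bar>c - c'\<bar>"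
proof -
  have "a * b * c - a' * b' * c' = (a - a') * (b * c) + (b - b') * (a' * c) + (c - c') * (a' * b')"
    by (simp add: algebra_simps)
  moreover have "\<bar>(a - a') * (b * c)\<bar> \<le> \<bar>a - a'\<bar>" "\<bar>(b - b') * (a' * c)\<bar> \<le> \<bar>b - b'\<bar>"
    "\<bar>(c - c') * (a' * b')\<bar> \<le> \<bar>c - c'\<bar>"
    using assms by (auto simp: abs_mult intro!: mult_left_le mult_le_one)
  ultimately show ?thesis by linarith
qed

lemma Lambda3_diff_le:
  assumes "prime p" "odd p"
    and g: "\<And>x. x \<in> V p n \<Longrightarrow> \<bar>g x\<bar> \<le> 1" and h: "\<And>x. x \<in> V p n \<Longrightarrow> \<bar>h x\<bar> \<le> 1"
  shows "\<bar>Lambda3 p n g - Lambda3 p n h\<bar> \<le> 3 * (\<Sum>x\<in>V p n. \<bar>g x - h x\<bar>) / real p ^ n"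
proof -
  have p: "p > 0" using assms(1) prime_gt_0_nat by blast
  define D where "D = (\<Sum>x\<in>V p n. \<bar>g x - h x\<bar>)"
  define \<delta> where "\<delta> x = \<bar>g x - h x\<bar>" for x
  have "\<bar>Lambda3 p n g - Lambda3 p n h\<bar> * real p ^ (2 * n)
      = \<bar>\<Sum>m\<in>V p n. \<Sum>d\<in>V p n. g m * g (vadd p m d) * g (vadd p m (vadd p d d))
          - h m * h (vadd p m d) * h (vadd p m (vadd p d d))\<bar>"
    using p by (simp add: Lambda3_def abs_divide sum_subtractf flip: diff_divide_distrib)
  also have "\<dots> \<le> (\<Sum>m\<in>V p n. \<Sum>d\<in>V p n. \<delta> m + \<delta> (vadd p m d) + \<delta> (vadd p m (vadd p d d)))"
    unfolding \<delta>_def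
    by (rule order_trans[OF sum_abs sum_mono], rule order_trans[OF sum_abs sum_mono],
        rule abs_triple_prod_diff_le) (auto intro!: g h vadd_in_V[OF p])
  also have "\<dots> = (\<Sum>m\<in>V p n. real p ^ n * \<delta> m + D + D)"
  proof (intro sum.cong refl)
    fix m assume m: "m \<in> V p n"
    have "(\<Sum>d\<in>V p n. \<delta> (vadd p m d)) = D"
      using sum_V_vadd[OF p m, of \<delta>] by (simp add: vadd_commute[of p m] D_def \<delta>_def)
    moreover have "(\<Sum>d\<in>V p n. \<delta> (vadd p m (vadd p d d))) = D"
      using sum_V_vadd_double[OF assms(1,2) m, of \<delta>] by (simp add: D_def \<delta>_def)
    ultimately show "(\<Sum>d\<in>V p n. \<delta> m + \<delta> (vadd p m d) + \<delta> (vadd p m (vadd p d d)))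
        = real p ^ n * \<delta> m + D + D"
      by (simp add: sum.distrib card_V)
  qed
  also have "\<dots> = 3 * D * real p ^ n"
    by (simp add: sum.distrib D_def \<delta>_def card_V flip: sum_distrib_left)
  finally have "(\<bar>Lambda3 p n g - Lambda3 p n h\<bar> * real p ^ n) * real p ^ n \<le> (3 * D) * real p ^ n"
    by (simp add: mult_2 power_add mult.assoc)
  hence "\<bar>Lambda3 p n g - Lambda3 p n h\<bar> * real p ^ n \<le> 3 * D"
    using p by (simp add: mult_le_cancel_right)
  thus ?thesis
    using p by (simp add: D_def pos_le_divide_eq)
qed

lemma avgW_diff: "avgW p W f m - avgW p W g m = avgW p W (\<lambda>x. f x - g x) m"
  by (simp add: avgW_def sum_subtractf diff_divide_distrib)

lemma abs_autocorr_le_1: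
  assumes p: "p > 0" and u: "u \<in> V p n" and f: "\<And>x. x \<in> V p n \<Longrightarrow> \<bar>f x\<bar> \<le> 1"
  shows "\<bar>autocorr p n f u\<bar> \<le> 1"
proof -
  have "\<bar>\<Sum>m\<in>V p n. f m * f (vadd p m u)\<bar> \<le> (\<Sum>m\<in>V p n. 1)"
    using f u vadd_in_V[OF p]
    by (intro order_trans[OF sum_abs sum_mono]) (auto simp: abs_mult intro: mult_le_one)
  thus ?thesis
    using p by (simp add: autocorr_def abs_divide card_V)
qed

lemma powr_ge_card_subspace:
  assumes "p > 1" "is_subspace p n W" "codim p n W \<le> sqrt (real n)"
  shows "real p powr (real n - sqrt (real n)) \<le> card W"
proof -
  have "real p powr (real n - sqrt (real n)) \<le> real p powr (log (real p) (card W))"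
    using assms by (intro powr_mono) (auto simp: codim_def)
  also have "\<dots> = card W"
    using assms card_subspace_pos[of p n W] by simp
  finally show ?thesis .
qed

lemma subspace_ratios_le:
  assumes p: "p \<ge> 3" and n: "real n \<ge> 36" and W: "is_subspace p n W" "codim p n W \<le> sqrt (real n)"
  defines "E \<equiv> 3 powr (3 * sqrt (real n) - real n / 2)"
  shows "sqrt (real p ^ n) / card W \<le> E" and "(real p ^ n)\<^sup>2 / card W ^ 3 \<le> E"
proof -
  define L where "L = real p powr (real n - sqrt (real n))"
  have L: "0 < L" "L \<le> card W"
    using p powr_ge_card_subspace[OF _ W] by (auto simp: L_def)
  have "6 * sqrt (real n) \<le> sqrt (real n) * sqrt (real n)"
    using real_sqrt_le_mono[OF n] by (intro mult_right_mono) auto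
  hence exp_nonpos: "3 * sqrt (real n) - real n / 2 \<le> 0" by simp
  have to_E: "real p powr x \<le> E" if "x \<le> 3 * sqrt (real n) - real n / 2" for x
  proof -
    have "real p powr x \<le> real p powr (3 * sqrt (real n) - real n / 2)"
      using p that by (intro powr_mono) auto
    also have "\<dots> \<le> E"
      unfolding E_def using p exp_nonpos by (intro powr_mono2') auto
    finally show ?thesis .
  qed
  have N: "real p ^ n = real p powr real n"
    using p by (simp add: powr_realpow)
  have "sqrt (real p ^ n) / card W \<le> real p powr (real n / 2) / L"
    unfolding N using L by (intro frac_le) (auto simp: powr_half_sqrt_powr)
  also have "\<dots> = real p powr (sqrt (real n) - real n / 2)"
    by (simp add: L_def powr_diff[symmetric] algebra_simps)
  also have "\<dots> \<le> E"
    by (intro to_E) simp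
  finally show "sqrt (real p ^ n) / card W \<le> E" .
  have "(real p ^ n)\<^sup>2 / card W ^ 3 \<le> (real p powr real n)\<^sup>2 / L ^ 3"
    unfolding N using L by (intro divide_left_mono power_mono) auto
  also have "\<dots> = real p powr (2 * real n) / real p powr (3 * (real n - sqrt (real n)))"
    using p by (simp add: L_def powr_power)
  also have "\<dots> = real p powr (3 * sqrt (real n) - real n)"
    by (simp add: powr_diff[symmetric] algebra_simps)
  also have "\<dots> \<le> E"
    by (intro to_E) simp
  finally show "(real p ^ n)\<^sup>2 / card W ^ 3 \<le> E" .
qed

section \<open>Three-term progressions\<close>

definition ap3 :: "nat \<Rightarrow> (nat \<Rightarrow> nat) \<Rightarrow> (nat \<Rightarrow> nat) \<Rightarrow> (nat \<Rightarrow> nat) set" where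
  "ap3 p m d = {m, vadd p m d, vadd p m (vadd p d d)}"

lemma ap3_subset_V: "p > 0 \<Longrightarrow> m \<in> V p n \<Longrightarrow> d \<in> V p n \<Longrightarrow> ap3 p m d \<subseteq> V p n"
  by (auto simp: ap3_def intro!: vadd_in_V)

lemma ap3_vzero: "p > 0 \<Longrightarrow> m \<in> V p n \<Longrightarrow> ap3 p m vzero = {m}"
  by (simp add: ap3_def vadd_vzero vzero_in_V)

lemma ap3_distinct:
  assumes "prime p" "odd p" "m \<in> V p n" "d \<in> V p n" "d \<noteq> vzero"
  shows "distinct [m, vadd p m d, vadd p m (vadd p d d)]"
proof -
  have p: "p > 0" using assms(1) prime_gt_0_nat by blast
  have "vadd p m d \<noteq> m"
    using vadd_eq_self_imp_vzero[OF p assms(3,4)] assms(5) by blast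
  moreover have "vadd p m (vadd p d d) \<noteq> m"
    using vadd_eq_self_imp_vzero[OF p assms(3) vadd_in_V[OF p assms(4,4)]]
      vadd_double_eq_vzero[OF assms(1,2,4)] assms(5) by blast
  moreover have "vadd p m (vadd p d d) \<noteq> vadd p m d"
  proof
    assume "vadd p m (vadd p d d) = vadd p m d"
    hence "vadd p (vadd p m d) d = vadd p m d" by (simp add: vadd_assoc)
    thus False
      using vadd_eq_self_imp_vzero[OF p vadd_in_V[OF p assms(3,4)] assms(4)] assms(5) by blast
  qed
  ultimately show ?thesis by auto
qed

lemma Lambda3_indicator:
  "Lambda3 p n (\<lambda>m. of_bool (X m))
    = (\<Sum>m\<in>V p n. \<Sum>d\<in>V p n. of_bool (\<forall>x\<in>ap3 p m d. X x)) / real p ^ (2 * n)"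
proof -
  have "of_bool (X m) * of_bool (X (vadd p m d)) * of_bool (X (vadd p m (vadd p d d)))
      = (of_bool (\<forall>x\<in>ap3 p m d. X x) :: real)" for m d
    by (simp add: ap3_def)
  thus ?thesis unfolding Lambda3_def by (simp only:)
qed

lemma sum_ap3_mem_le:
  assumes "prime p" "odd p" "x \<in> V p n"
  shows "(\<Sum>m\<in>V p n. \<Sum>d\<in>V p n. of_bool (x \<in> ap3 p m d) :: real) \<le> 3 * real p ^ n"
proof -
  have p: "p > 0" using assms(1) prime_gt_0_nat by blast
  have one: "(\<Sum>d\<in>V p n. of_bool (x = d) :: real) = 1"
    using assms(3) finite_V[OF p] by simp
  have "(\<Sum>m\<in>V p n. \<Sum>d\<in>V p n. of_bool (x \<in> ap3 p m d) :: real)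
      \<le> (\<Sum>m\<in>V p n. \<Sum>d\<in>V p n. of_bool (x = m) + of_bool (x = vadd p m d)
          + of_bool (x = vadd p m (vadd p d d)))"
    by (intro sum_mono) (auto simp: ap3_def)
  also have "\<dots> = (\<Sum>m\<in>V p n. real p ^ n * of_bool (x = m) + 1 + 1)"
  proof (intro sum.cong refl)
    fix m assume m: "m \<in> V p n"
    have "(\<Sum>d\<in>V p n. of_bool (x = vadd p m d) :: real) = 1"
      using sum_V_vadd[OF p m, of "\<lambda>d. of_bool (x = d) :: real"] one by (simp add: vadd_commute[of p m])
    moreover have "(\<Sum>d\<in>V p n. of_bool (x = vadd p m (vadd p d d)) :: real) = 1"
      using sum_V_vadd_double[OF assms(1,2) m, of "\<lambda>d. of_bool (x = d) :: real"] one by simp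
    ultimately show "(\<Sum>d\<in>V p n. of_bool (x = m) + of_bool (x = vadd p m d)
        + of_bool (x = vadd p m (vadd p d d))) = real p ^ n * of_bool (x = m) + 1 + 1"
      by (simp add: sum.distrib card_V)
  qed
  also have "\<dots> = 3 * real p ^ n"
    using assms(3) finite_V[OF p] by (simp add: sum.distrib card_V)
  finally show ?thesis .
qed

lemma of_bool_meets_le_sum:
  assumes "finite A"
  shows "of_bool (A \<inter> B \<noteq> {}) \<le> (\<Sum>x\<in>A. of_bool (x \<in> B) :: real)"
proof (cases "A \<inter> B = {}")
  case False
  then obtain x where "x \<in> A" "x \<in> B" by blast
  thus ?thesis using member_le_sum[OF \<open>x \<in> A\<close> _ assms, of "\<lambda>x. of_bool (x \<in> B) :: real"] by simp
qed (simp add: sum_nonneg)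

lemma sum_ap3_meets_le:
  assumes "prime p" "odd p" "m \<in> V p n" "d \<in> V p n"
  shows "(\<Sum>m'\<in>V p n. \<Sum>d'\<in>V p n. of_bool (ap3 p m d \<inter> ap3 p m' d' \<noteq> {}) :: real)
    \<le> 9 * real p ^ n"
proof -
  have p: "p > 0" using assms(1) prime_gt_0_nat by blast
  have "(\<Sum>m'\<in>V p n. \<Sum>d'\<in>V p n. of_bool (ap3 p m d \<inter> ap3 p m' d' \<noteq> {}) :: real)
      \<le> (\<Sum>m'\<in>V p n. \<Sum>d'\<in>V p n. \<Sum>x\<in>ap3 p m d. of_bool (x \<in> ap3 p m' d'))"
    by (intro sum_mono of_bool_meets_le_sum) (simp add: ap3_def)
  also have "\<dots> = (\<Sum>x\<in>ap3 p m d. \<Sum>m'\<in>V p n. \<Sum>d'\<in>V p n. of_bool (x \<in> ap3 p m' d'))"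
    by (simp only: sum.swap[of _ "V p n" "ap3 p m d"])
  also have "\<dots> \<le> (\<Sum>x\<in>ap3 p m d. 3 * real p ^ n)"
    using ap3_subset_V[OF p assms(3,4)] by (intro sum_mono sum_ap3_mem_le[OF assms(1,2)]) auto
  also have "\<dots> \<le> 9 * real p ^ n"
  proof -
    have "card (ap3 p m d) \<le> 3" by (auto simp: ap3_def card_insert_if)
    hence "real (card (ap3 p m d)) * (3 * real p ^ n) \<le> 3 * (3 * real p ^ n)"
      by (intro mult_right_mono) auto
    thus ?thesis by simp
  qed
  finally show ?thesis .
qed

section \<open>Independent random subsets\<close>

lemma prod_indicator_list:
  assumes "finite A" "set bs \<subseteq> A"
  shows "(\<Prod>x\<in>A. prod_list (map (\<lambda>y. if y = x then g x else 1) bs)) = prod_list (map g bs)"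
  using assms(2)
proof (induction bs)
  case (Cons b bs)
  have "(\<Prod>x\<in>A. prod_list (map (\<lambda>y. if y = x then g x else 1) (b # bs)))
      = (\<Prod>x\<in>A. if b = x then g x else 1) * (\<Prod>x\<in>A. prod_list (map (\<lambda>y. if y = x then g x else 1) bs))"
    by (simp add: prod.distrib)
  also have "(\<Prod>x\<in>A. if b = x then g x else 1) = g b"
    using Cons.prems assms(1) by (simp add: prod.delta)
  finally show ?case using Cons by simp
qed simp

text \<open>
  The random subset of \<open>A\<close> containing each \<open>x\<close> independently with probability \<open>q x\<close>;
  an outcome is its indicator function, extensional outside \<open>A\<close>.
\<close>

locale bernoulli_product =
  fixes A :: "'a set" and q :: "'a \<Rightarrow> real"
  assumes finite_A: "finite A"
    and q_nonneg: "x \<in> A \<Longrightarrow> 0 \<le> q x" and q_le_1: "x \<in> A \<Longrightarrow> q x \<le> 1"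
begin

definition outcomes :: "('a \<Rightarrow> bool) set" where
  "outcomes = A \<rightarrow>\<^sub>E (UNIV :: bool set)"

definition weight :: "('a \<Rightarrow> bool) \<Rightarrow> real" where
  "weight X = (\<Prod>x\<in>A. if X x then q x else 1 - q x)"

definition expect :: "(('a \<Rightarrow> bool) \<Rightarrow> real) \<Rightarrow> real" where
  "expect g = (\<Sum>X\<in>outcomes. weight X * g X)"

definition centred :: "('a \<Rightarrow> bool) \<Rightarrow> 'a \<Rightarrow> real" where
  "centred X x = of_bool (X x) - q x"

definition prob_all :: "'a set \<Rightarrow> real" where
  "prob_all P = (\<Prod>x\<in>P. q x)"

lemma finite_outcomes: "finite outcomes"
  unfolding outcomes_def using finite_A by (intro finite_PiE) auto

lemma weight_nonneg: "weight X \<ge> 0"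
  unfolding weight_def using q_nonneg q_le_1 by (intro prod_nonneg) auto

lemma expect_prod:
  "expect (\<lambda>X. \<Prod>x\<in>A. h x (X x)) = (\<Prod>x\<in>A. q x * h x True + (1 - q x) * h x False)"
proof -
  have "expect (\<lambda>X. \<Prod>x\<in>A. h x (X x))
      = (\<Sum>X\<in>outcomes. \<Prod>x\<in>A. (if X x then q x else 1 - q x) * h x (X x))"
    unfolding expect_def weight_def by (simp add: prod.distrib)
  also have "\<dots> = (\<Prod>x\<in>A. \<Sum>b\<in>UNIV. (if b then q x else 1 - q x) * h x b)"
    unfolding outcomes_def by (rule prod_sum_PiE[symmetric]) (use finite_A in auto)
  also have "\<dots> = (\<Prod>x\<in>A. q x * h x True + (1 - q x) * h x False)"
    by (simp add: UNIV_bool add.commute)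
  finally show ?thesis .
qed

lemma expect_const: "expect (\<lambda>_. c) = c"
proof -
  have "expect (\<lambda>_. 1) = 1"
    using expect_prod[of "\<lambda>_ _. 1"] by simp
  thus ?thesis by (simp add: expect_def flip: sum_distrib_right)
qed

lemma expect_add: "expect (\<lambda>X. g X + h X) = expect g + expect h"
  unfolding expect_def by (simp add: distrib_left sum.distrib)

lemma expect_diff: "expect (\<lambda>X. g X - h X) = expect g - expect h"
  unfolding expect_def by (simp add: right_diff_distrib sum_subtractf)

lemma expect_cmult: "expect (\<lambda>X. c * g X) = c * expect g"
  unfolding expect_def by (simp add: sum_distrib_left mult_ac)

lemma expect_divide: "expect (\<lambda>X. g X / c) = expect g / c"
  using expect_cmult[of "1 / c" g] by simp

lemma expect_sum: "expect (\<lambda>X. \<Sum>i\<in>I. g i X) = (\<Sum>i\<in>I. expect (g i))"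
  unfolding expect_def by (simp add: sum_distrib_left sum.swap[of _ outcomes])

lemma expect_mono: "(\<And>X. X \<in> outcomes \<Longrightarrow> g X \<le> h X) \<Longrightarrow> expect g \<le> expect h"
  unfolding expect_def by (intro sum_mono mult_left_mono weight_nonneg) auto

lemma expect_le_bound: "(\<And>X. X \<in> outcomes \<Longrightarrow> \<bar>g X\<bar> \<le> c) \<Longrightarrow> expect g \<le> c"
  using expect_mono[of g "\<lambda>_. c"] by (simp add: expect_const abs_le_iff)

lemma exists_outcome_le_expect: "\<exists>X\<in>outcomes. g X \<le> expect g"
proof (rule ccontr)
  assume "\<not> ?thesis"
  hence gt: "expect g < g X" if "X \<in> outcomes" for X
    using that by force
  have "(\<Sum>X\<in>outcomes. weight X) = 1"
    using expect_const[of 1] by (simp add: expect_def)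
  then obtain X0 where X0: "X0 \<in> outcomes" "weight X0 > 0"
    using weight_nonneg by (metis less_eq_real_def sum.neutral zero_neq_one)
  have "(\<Sum>X\<in>outcomes. weight X * expect g) < (\<Sum>X\<in>outcomes. weight X * g X)"
  proof (rule sum_strict_mono_ex1[OF finite_outcomes])
    show "\<forall>X\<in>outcomes. weight X * expect g \<le> weight X * g X"
      using gt weight_nonneg by (simp add: less_imp_le mult_left_mono)
    show "\<exists>X\<in>outcomes. weight X * expect g < weight X * g X"
      using X0 gt by (intro bexI[of _ X0] mult_strict_left_mono) auto
  qed
  thus False
    using expect_const[of "expect g"] by (simp add: expect_def)
qed

lemma expect_all_true:
  assumes "P \<subseteq> A"
  shows "expect (\<lambda>X. of_bool (\<forall>x\<in>P. X x)) = prob_all P"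
proof -
  have "of_bool (\<forall>x\<in>P. X x) = (\<Prod>x\<in>P. of_bool (X x) :: real)" for X
    using finite_subset[OF assms finite_A] by (induction P rule: finite_induct) auto
  also have "(\<Prod>x\<in>P. of_bool (X x)) = (\<Prod>x\<in>A. if x \<in> P then of_bool (X x) else 1 :: real)" for X
    using assms by (simp add: prod.If_cases[OF finite_A] Int_absorb1)
  finally have "expect (\<lambda>X. of_bool (\<forall>x\<in>P. X x))
      = (\<Prod>x\<in>A. q x * (if x \<in> P then 1 else 1) + (1 - q x) * (if x \<in> P then 0 else 1))"
    using expect_prod[of "\<lambda>x b. if x \<in> P then of_bool b else 1"] by simp
  also have "\<dots> = (\<Prod>x\<in>A. if x \<in> P then q x else 1)"
    by (intro prod.cong) auto
  also have "\<dots> = prob_all P"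
    using assms by (simp add: prod.If_cases[OF finite_A] Int_absorb1 prob_all_def)
  finally show ?thesis .
qed

lemma expect_centred_lonely:
  assumes "a \<in> A" "set bs \<subseteq> A" "a \<notin> set bs"
  shows "expect (\<lambda>X. centred X a * prod_list (map (centred X) bs)) = 0"
proof -
  define h where "h x b = (if x = a then of_bool b - q x
      else prod_list (map (\<lambda>y. if y = x then of_bool b - q x else 1) bs))" for x b
  have "(\<Prod>x\<in>A. h x (X x)) = centred X a * prod_list (map (centred X) bs)" for X
  proof -
    have "(\<Prod>x\<in>A - {a}. h x (X x))
        = (\<Prod>x\<in>A - {a}. prod_list (map (\<lambda>y. if y = x then centred X x else 1) bs))"
      unfolding h_def centred_def by (intro prod.cong) auto
    also have "\<dots> = prod_list (map (centred X) bs)"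
      using assms finite_A by (intro prod_indicator_list) auto
    finally show ?thesis
      using assms(1) finite_A by (simp add: prod.remove h_def centred_def)
  qed
  hence "expect (\<lambda>X. centred X a * prod_list (map (centred X) bs))
      = (\<Prod>x\<in>A. q x * h x True + (1 - q x) * h x False)"
    using expect_prod[of h] by simp
  also have "\<dots> = 0"
    using assms(1) finite_A by (intro prod_zero bexI[of _ a]) (auto simp: h_def algebra_simps)
  finally show ?thesis .
qed

lemma expect_centred_mult_le:
  assumes "x \<in> A" "y \<in> A"
  shows "expect (\<lambda>X. centred X x * centred X y) \<le> of_bool (x = y)"
proof (cases "x = y")
  case True
  have "\<bar>centred X x * centred X y\<bar> \<le> 1" for X
    using assms q_nonneg q_le_1 by (auto simp: centred_def abs_mult intro!: mult_le_one)
  thus ?thesis using True by (simp add: expect_le_bound)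
next
  case False
  thus ?thesis using expect_centred_lonely[of x "[y]"] assms by simp
qed

lemma expect_sum_centred_sq: "expect (\<lambda>X. (\<Sum>x\<in>A. centred X x)\<^sup>2) \<le> card A"
proof -
  have "expect (\<lambda>X. (\<Sum>x\<in>A. centred X x)\<^sup>2) = (\<Sum>x\<in>A. \<Sum>y\<in>A. expect (\<lambda>X. centred X x * centred X y))"
    by (simp add: power2_eq_square sum_product expect_sum)
  also have "\<dots> \<le> (\<Sum>x\<in>A. \<Sum>y\<in>A. of_bool (x = y))"
    by (intro sum_mono expect_centred_mult_le)
  also have "\<dots> = card A"
    using finite_A by simp
  finally show ?thesis .
qed

lemma expect_cov_all_true_le:
  assumes "P \<subseteq> A" "Q \<subseteq> A"
  shows "expect (\<lambda>X. (of_bool (\<forall>x\<in>P. X x) - prob_all P) * (of_bool (\<forall>x\<in>Q. X x) - prob_all Q))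
    \<le> of_bool (P \<inter> Q \<noteq> {})"
proof -
  have prob_all_01: "0 \<le> prob_all R \<and> prob_all R \<le> 1" if "R \<subseteq> A" for R
    unfolding prob_all_def using that q_nonneg q_le_1 by (auto intro!: prod_nonneg prod_le_1)
  have "(of_bool (\<forall>x\<in>P. X x) - prob_all P) * (of_bool (\<forall>x\<in>Q. X x) - prob_all Q)
      = of_bool (\<forall>x\<in>P \<union> Q. X x) - prob_all Q * of_bool (\<forall>x\<in>P. X x)
        - prob_all P * of_bool (\<forall>x\<in>Q. X x) + prob_all P * prob_all Q" for X
    by (auto simp: algebra_simps)
  hence "expect (\<lambda>X. (of_bool (\<forall>x\<in>P. X x) - prob_all P) * (of_bool (\<forall>x\<in>Q. X x) - prob_all Q))
      = prob_all (P \<union> Q) - prob_all P * prob_all Q"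
    using assms by (simp add: expect_add expect_diff expect_cmult expect_const expect_all_true)
  also have "\<dots> \<le> of_bool (P \<inter> Q \<noteq> {})"
  proof (cases "P \<inter> Q = {}")
    case True
    thus ?thesis
      using assms finite_subset[OF _ finite_A] by (simp add: prob_all_def prod.union_disjoint)
  next
    case False
    have "prob_all (P \<union> Q) \<le> 1" "0 \<le> prob_all P * prob_all Q"
      using prob_all_01[of "P \<union> Q"] prob_all_01[of P] prob_all_01[of Q] assms by auto
    thus ?thesis using False by simp
  qed
  finally show ?thesis .
qed

end

section \<open>Random rounding in \<open>F\<^sub>p\<^sup>n\<close>\<close>

lemma exists_superset_card_ge_sum:
  fixes g :: "'a \<Rightarrow> real"
  assumes A: "finite A" and Y: "Y \<subseteq> A" and g: "\<And>x. x \<in> A \<Longrightarrow> g x \<le> 1"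
  shows "\<exists>Z. Y \<subseteq> Z \<and> Z \<subseteq> A \<and> (\<Sum>x\<in>A. g x) \<le> card Z
    \<and> card (Z - Y) \<le> \<bar>(\<Sum>x\<in>A. g x) - card Y\<bar> + 1"
proof -
  define k where "k = nat \<lceil>(\<Sum>x\<in>A. g x) - card Y\<rceil>"
  have "(\<Sum>x\<in>A. g x) \<le> card A"
    using sum_mono[of A g "\<lambda>_. 1"] g by simp
  also have "card A = card Y + card (A - Y)"
    using A Y by (simp add: card_Diff_subset finite_subset card_mono)
  finally have "k \<le> card (A - Y)"
    unfolding k_def by linarith
  then obtain S where S: "S \<subseteq> A - Y" "card S = k"
    using obtain_subset_with_card_n by blast
  have fin: "finite S" "finite Y" using S(1) A Y finite_subset by blast+
  have "Y \<union> S - Y = S" using S(1) by blast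
  moreover have "card (Y \<union> S) = card Y + k"
  proof -
    have "Y \<inter> S = {}" using S(1) by blast
    thus ?thesis using S(2) fin by (simp add: card_Un_disjoint)
  qed
  moreover have "(\<Sum>x\<in>A. g x) - card Y \<le> k" "k \<le> \<bar>(\<Sum>x\<in>A. g x) - card Y\<bar> + 1"
    unfolding k_def using real_nat_ceiling_ge ceiling_correct[of "(\<Sum>x\<in>A. g x) - card Y"]
    by (auto simp: max_def of_nat_nat)
  ultimately show ?thesis
    using S Y by (intro exI[of _ "Y \<union> S"]) auto
qed

locale random_subset = bernoulli_product "V p n" j
  for p n :: nat and j :: "(nat \<Rightarrow> nat) \<Rightarrow> real" +
  assumes prime_p: "prime p" and odd_p: "odd p"
begin

lemma p_pos: "p > 0"
  using prime_p prime_gt_0_nat by blast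

lemma abs_centred_le_1: "x \<in> V p n \<Longrightarrow> \<bar>centred X x\<bar> \<le> 1"
  using q_nonneg q_le_1 by (auto simp: centred_def)

lemma expect_centred_four_zero:
  assumes u: "u \<in> V p n" "u \<noteq> vzero" and m: "m \<in> V p n" and m': "m' \<in> V p n" and "m \<noteq> m'"
  shows "expect (\<lambda>X. centred X m * centred X (vadd p m u) * (centred X m' * centred X (vadd p m' u))) = 0"
proof -
  have mu: "vadd p m u \<in> V p n" and m'u: "vadd p m' u \<in> V p n"
    using u m m' vadd_in_V[OF p_pos] by auto
  have shift_ne: "vadd p x u \<noteq> x" if "x \<in> V p n" for x
    using vadd_eq_self_imp_vzero[OF p_pos that u(1)] u(2) by blast
  show ?thesis
  proof (cases "m \<in> {vadd p m u, m', vadd p m' u}")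
    case False
    thus ?thesis
      using expect_centred_lonely[of m "[vadd p m u, m', vadd p m' u]"] m mu m' m'u
      by (simp add: mult_ac)
  next
    case True
    hence m_eq: "m = vadd p m' u" using \<open>m \<noteq> m'\<close> shift_ne[OF m] by auto
    have "vadd p m' (vadd p u u) \<noteq> m'"
      using vadd_eq_self_imp_vzero[OF p_pos m' vadd_in_V[OF p_pos u(1) u(1)]]
        vadd_double_eq_vzero[OF prime_p odd_p u(1)] u(2) by blast
    hence "vadd p m u \<noteq> m'" by (simp add: m_eq vadd_assoc)
    hence "vadd p m u \<notin> {m, m', vadd p m' u}" using shift_ne[OF m] m_eq by auto
    thus ?thesis
      using expect_centred_lonely[of "vadd p m u" "[m, m', vadd p m' u]"] m mu m' m'u
      by (simp add: mult_ac)
  qed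
qed

lemma expect_autocorr_sq_le:
  assumes u: "u \<in> V p n"
  shows "expect (\<lambda>X. (autocorr p n (centred X) u)\<^sup>2) \<le> of_bool (u = vzero) + 1 / real p ^ n"
proof (cases "u = vzero")
  case True
  have "\<bar>(autocorr p n (centred X) u)\<^sup>2\<bar> \<le> 1" for X
    using abs_autocorr_le_1[OF p_pos u, of "centred X"] abs_centred_le_1 by (simp add: abs_square_le_1)
  hence "expect (\<lambda>X. (autocorr p n (centred X) u)\<^sup>2) \<le> 1"
    by (rule expect_le_bound)
  thus ?thesis using True by (simp add: add_increasing2)
next
  case False
  define F where "F X m m' = centred X m * centred X (vadd p m u) * (centred X m' * centred X (vadd p m' u))"
    for X m m'
  have "(autocorr p n (centred X) u)\<^sup>2 = (\<Sum>m\<in>V p n. \<Sum>m'\<in>V p n. F X m m') / (real p ^ n)\<^sup>2" for X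
    by (simp add: autocorr_def F_def power_divide power2_eq_square sum_product)
  hence "expect (\<lambda>X. (autocorr p n (centred X) u)\<^sup>2)
      = (\<Sum>m\<in>V p n. \<Sum>m'\<in>V p n. expect (\<lambda>X. F X m m')) / (real p ^ n)\<^sup>2"
    by (simp add: expect_divide expect_sum)
  also have "\<dots> \<le> (\<Sum>m\<in>V p n. \<Sum>m'\<in>V p n. of_bool (m = m')) / (real p ^ n)\<^sup>2"
  proof (intro divide_right_mono sum_mono)
    fix m m' assume m: "m \<in> V p n" and m': "m' \<in> V p n"
    show "expect (\<lambda>X. F X m m') \<le> of_bool (m = m')"
    proof (cases "m = m'")
      case True
      have "\<bar>F X m m'\<bar> \<le> 1" for X
        unfolding F_def using m m' u vadd_in_V[OF p_pos]
        by (auto simp: abs_mult intro!: mult_le_one abs_centred_le_1)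
      thus ?thesis using True by (simp add: expect_le_bound)
    qed (simp add: F_def expect_centred_four_zero[OF u False m m'])
  qed simp
  also have "\<dots> = 1 / real p ^ n"
    using finite_V[OF p_pos] p_pos by (simp add: card_V power2_eq_square)
  finally show ?thesis using False by simp
qed

lemma expect_autocorr_energy_le: "expect (\<lambda>X. autocorr_energy p n (centred X)) \<le> 2"
proof -
  have "expect (\<lambda>X. autocorr_energy p n (centred X))
      = (\<Sum>u\<in>V p n. expect (\<lambda>X. (autocorr p n (centred X) u)\<^sup>2))"
    by (simp add: autocorr_energy_def expect_sum)
  also have "\<dots> \<le> (\<Sum>u\<in>V p n. of_bool (u = vzero) + 1 / real p ^ n)"
    by (intro sum_mono expect_autocorr_sq_le)
  also have "\<dots> = 2"
    using finite_V[OF p_pos] vzero_in_V[OF p_pos] p_pos by (simp add: sum.distrib card_V)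
  finally show ?thesis .
qed

definition ap3_defect :: "((nat \<Rightarrow> nat) \<Rightarrow> bool) \<Rightarrow> real" where
  "ap3_defect X = (\<Sum>m\<in>V p n. \<Sum>d\<in>V p n. of_bool (\<forall>x\<in>ap3 p m d. X x) - prob_all (ap3 p m d))"

lemma expect_ap3_defect_sq_le: "expect (\<lambda>X. (ap3_defect X)\<^sup>2) \<le> 9 * (real p ^ n) ^ 3"
proof -
  have "expect (\<lambda>X. (ap3_defect X)\<^sup>2) = (\<Sum>m\<in>V p n. \<Sum>m'\<in>V p n. \<Sum>d\<in>V p n. \<Sum>d'\<in>V p n.
      expect (\<lambda>X. (of_bool (\<forall>x\<in>ap3 p m d. X x) - prob_all (ap3 p m d))
        * (of_bool (\<forall>x\<in>ap3 p m' d'. X x) - prob_all (ap3 p m' d'))))"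
    by (simp add: ap3_defect_def power2_eq_square sum_product expect_sum)
  also have "\<dots> \<le> (\<Sum>m\<in>V p n. \<Sum>m'\<in>V p n. \<Sum>d\<in>V p n. \<Sum>d'\<in>V p n.
      of_bool (ap3 p m d \<inter> ap3 p m' d' \<noteq> {}))"
    by (intro sum_mono expect_cov_all_true_le ap3_subset_V[OF p_pos])
  also have "\<dots> = (\<Sum>m\<in>V p n. \<Sum>d\<in>V p n. \<Sum>m'\<in>V p n. \<Sum>d'\<in>V p n.
      of_bool (ap3 p m d \<inter> ap3 p m' d' \<noteq> {}))"
    by (rule sum.cong[OF refl], rule sum.swap)
  also have "\<dots> \<le> (\<Sum>m\<in>V p n. \<Sum>d\<in>V p n. 9 * real p ^ n)"
    by (intro sum_mono sum_ap3_meets_le[OF prime_p odd_p])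
  also have "\<dots> = 9 * (real p ^ n) ^ 3"
    by (simp add: card_V power3_eq_cube)
  finally show ?thesis .
qed

lemma prob_all_ap3_diff_le:
  assumes m: "m \<in> V p n" and d: "d \<in> V p n"
  shows "\<bar>prob_all (ap3 p m d) - j m * j (vadd p m d) * j (vadd p m (vadd p d d))\<bar> \<le> of_bool (d = vzero)"
proof (cases "d = vzero")
  case True
  have "vadd p vzero vzero = vzero" "vadd p m vzero = m"
    using m vzero_in_V[OF p_pos] vadd_vzero[OF p_pos] by auto
  moreover have "0 \<le> j m * j m * j m" "j m * j m * j m \<le> j m"
    using q_nonneg[OF m] q_le_1[OF m] mult_left_le[of "j m * j m" "j m"] mult_le_one[of "j m" "j m"]
    by (simp_all add: mult.assoc)
  ultimately show ?thesis
    using True q_le_1[OF m] ap3_vzero[OF p_pos m] by (simp add: prob_all_def)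
next
  case False
  thus ?thesis
    using ap3_distinct[OF prime_p odd_p m d] by (simp add: prob_all_def ap3_def)
qed

lemma Lambda3_indicator_diff_le:
  "\<bar>Lambda3 p n (\<lambda>m. of_bool (X m)) - Lambda3 p n j\<bar> \<le> (\<bar>ap3_defect X\<bar> + real p ^ n) / real p ^ (2 * n)"
proof -
  define E where "E = (\<Sum>m\<in>V p n. \<Sum>d\<in>V p n.
    prob_all (ap3 p m d) - j m * j (vadd p m d) * j (vadd p m (vadd p d d)))"
  have "Lambda3 p n (\<lambda>m. of_bool (X m)) - Lambda3 p n j = (ap3_defect X + E) / real p ^ (2 * n)"
    by (simp add: Lambda3_indicator Lambda3_def ap3_defect_def E_def sum_subtractf
        flip: diff_divide_distrib add_divide_distrib sum.distrib)
  moreover have "\<bar>E\<bar> \<le> (\<Sum>m\<in>V p n. \<Sum>d\<in>V p n. of_bool (d = vzero))"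
    unfolding E_def
    by (intro order_trans[OF sum_abs sum_mono] order_trans[OF sum_abs sum_mono] prob_all_ap3_diff_le)
  moreover have "(\<Sum>m\<in>V p n. \<Sum>d\<in>V p n. of_bool (d = vzero) :: real) = real p ^ n"
    using finite_V[OF p_pos] vzero_in_V[OF p_pos] by (simp add: card_V)
  ultimately show ?thesis
    by (simp add: abs_divide divide_right_mono order_trans[OF abs_triangle_ineq])
qed

lemma exists_good_outcome:
  "\<exists>X\<in>outcomes. autocorr_energy p n (centred X) \<le> 6 \<and> (ap3_defect X)\<^sup>2 \<le> 27 * (real p ^ n) ^ 3
     \<and> (\<Sum>m\<in>V p n. centred X m)\<^sup>2 \<le> 3 * real p ^ n"
proof -
  define N where "N = real p ^ n"
  have N: "N > 0" using p_pos by (simp add: N_def)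
  define G where "G X = autocorr_energy p n (centred X) / 2 + (ap3_defect X)\<^sup>2 / (9 * N ^ 3)
    + (\<Sum>m\<in>V p n. centred X m)\<^sup>2 / N" for X
  have "expect G \<le> 2 / 2 + (9 * N ^ 3) / (9 * N ^ 3) + N / N"
    unfolding G_def expect_add expect_divide
    using expect_autocorr_energy_le expect_ap3_defect_sq_le expect_sum_centred_sq N
    by (intro add_mono divide_right_mono) (auto simp: N_def card_V)
  also have "\<dots> = 3" using N by simp
  finally obtain X where X: "X \<in> outcomes" "G X \<le> 3"
    using exists_outcome_le_expect[of G] by force
  have "autocorr_energy p n (centred X) \<ge> 0"
    by (simp add: autocorr_energy_def sum_nonneg)
  moreover have "(ap3_defect X)\<^sup>2 / (9 * N ^ 3) \<ge> 0" "(\<Sum>m\<in>V p n. centred X m)\<^sup>2 / N \<ge> 0"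
    using N by auto
  ultimately have "autocorr_energy p n (centred X) \<le> 6" "(ap3_defect X)\<^sup>2 / (9 * N ^ 3) \<le> 3"
    "(\<Sum>m\<in>V p n. centred X m)\<^sup>2 / N \<le> 3"
    using X(2) unfolding G_def by linarith+
  thus ?thesis
    using X(1) N by (auto simp: N_def pos_divide_le_eq)
qed

lemma exists_top_up:
  assumes "(\<Sum>m\<in>V p n. centred X m)\<^sup>2 \<le> 3 * real p ^ n"
  shows "\<exists>Z. {m \<in> V p n. X m} \<subseteq> Z \<and> Z \<subseteq> V p n \<and> (\<Sum>m\<in>V p n. j m) \<le> card Z
    \<and> card (Z - {m \<in> V p n. X m}) \<le> 3 * sqrt (real p ^ n)"
proof -
  define Y where "Y = {m \<in> V p n. X m}"
  obtain Z where Z: "Y \<subseteq> Z" "Z \<subseteq> V p n" "(\<Sum>m\<in>V p n. j m) \<le> card Z"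
    "card (Z - Y) \<le> \<bar>(\<Sum>m\<in>V p n. j m) - card Y\<bar> + 1"
    using exists_superset_card_ge_sum[OF finite_A, of Y j] q_le_1 by (auto simp: Y_def)
  have "\<bar>(\<Sum>m\<in>V p n. j m) - card Y\<bar> = \<bar>\<Sum>m\<in>V p n. centred X m\<bar>"
    using finite_A by (simp add: Y_def centred_def sum_subtractf Collect_conj_eq Int_commute)
  also have "\<dots> \<le> sqrt (3 * real p ^ n)"
    using real_sqrt_le_mono[OF assms] by simp
  also have "\<dots> \<le> 2 * sqrt (real p ^ n)"
    using real_sqrt_le_mono[of 3 4] by (simp add: real_sqrt_mult mult_right_mono)
  finally have "card (Z - Y) \<le> 2 * sqrt (real p ^ n) + 1"
    using Z(4) by linarith
  moreover have "1 \<le> sqrt (real p ^ n)"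
    using p_pos by simp
  ultimately have "card (Z - Y) \<le> 3 * sqrt (real p ^ n)"
    by linarith
  thus ?thesis
    using Z unfolding Y_def by blast
qed

lemma Lambda3_indicator_close:
  assumes "(ap3_defect X)\<^sup>2 \<le> 27 * (real p ^ n) ^ 3"
  shows "\<bar>Lambda3 p n (\<lambda>m. of_bool (X m)) - Lambda3 p n j\<bar> \<le> 7 / sqrt (real p ^ n)"
proof -
  define s where "s = sqrt (real p ^ n)"
  have s: "1 \<le> s" "real p ^ n = s\<^sup>2"
    using p_pos by (auto simp: s_def)
  have "real p ^ (2 * n) = (real p ^ n)\<^sup>2"
    by (simp only: mult.commute[of 2 n] power_mult)
  hence s4: "real p ^ (2 * n) = s ^ 4"
    using s(2) by simp
  have "27 * (real p ^ n) ^ 3 = (sqrt 27 * s ^ 3)\<^sup>2"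
    by (simp add: s(2) power_mult_distrib power_mult[symmetric])
  hence "\<bar>ap3_defect X\<bar> \<le> \<bar>sqrt 27 * s ^ 3\<bar>"
    unfolding abs_le_square_iff using assms by simp
  hence "\<bar>ap3_defect X\<bar> \<le> sqrt 27 * s ^ 3"
    using s(1) by simp
  also have "\<dots> \<le> 6 * s ^ 3"
    using real_sqrt_le_mono[of 27 36] s(1) by (intro mult_right_mono) auto
  finally have defect: "\<bar>ap3_defect X\<bar> \<le> 6 * s ^ 3" .
  have "\<bar>Lambda3 p n (\<lambda>m. of_bool (X m)) - Lambda3 p n j\<bar> \<le> (\<bar>ap3_defect X\<bar> + s\<^sup>2) / s ^ 4"
    using Lambda3_indicator_diff_le[of X] unfolding s(2) s4 .
  also have "\<dots> \<le> (6 * s ^ 3 + s\<^sup>2) / s ^ 4"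
    using defect by (intro divide_right_mono) auto
  also have "\<dots> = 6 / s + 1 / s\<^sup>2"
    using s(1) by (simp add: field_simps power2_eq_square power3_eq_cube power4_eq_xxxx)
  also have "\<dots> \<le> 7 / s"
    using s(1) by (simp add: field_simps power2_eq_square)
  finally show ?thesis by (simp add: s_def)
qed

lemma avgW_indicator_close_pow4:
  assumes "autocorr_energy p n (centred X) \<le> 6" "is_subspace p n W" "m \<in> V p n"
  shows "\<bar>avgW p W (\<lambda>m. of_bool (X m)) m - avgW p W j m\<bar> ^ 4 \<le> 6 * ((real p ^ n)\<^sup>2 / card W ^ 3)"
proof -
  have "avgW p W (\<lambda>m. of_bool (X m)) m - avgW p W j m = avgW p W (centred X) m"
    by (simp add: avgW_diff centred_def[abs_def])
  hence "\<bar>avgW p W (\<lambda>m. of_bool (X m)) m - avgW p W j m\<bar> ^ 4 = (avgW p W (centred X) m) ^ 4"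
    by simp
  also have "\<dots> \<le> (real p ^ n)\<^sup>2 * autocorr_energy p n (centred X) / card W ^ 3"
    by (rule avgW_pow4_le[OF p_pos assms(2,3)])
  also have "\<dots> = (real p ^ n)\<^sup>2 / card W ^ 3 * autocorr_energy p n (centred X)"
    by simp
  also have "\<dots> \<le> (real p ^ n)\<^sup>2 / card W ^ 3 * 6"
    using assms(1) by (intro mult_left_mono) auto
  finally show ?thesis by (simp only: mult.commute)
qed

lemma sum_abs_top_up_diff:
  assumes "{m \<in> V p n. X m} \<subseteq> Z" "Z \<subseteq> V p n"
  shows "(\<Sum>x\<in>V p n. \<bar>of_bool (x \<in> Z) - of_bool (X x)\<bar> :: real) = card (Z - {m \<in> V p n. X m})"
proof -
  have sub: "Z - {m \<in> V p n. X m} \<subseteq> V p n" using assms(2) by blast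
  have "(\<Sum>x\<in>V p n. \<bar>of_bool (x \<in> Z) - of_bool (X x)\<bar> :: real)
      = (\<Sum>x\<in>V p n. of_bool (x \<in> Z - {m \<in> V p n. X m}))"
    using assms by (intro sum.cong) auto
  also have "\<dots> = card (Z - {m \<in> V p n. X m})"
    using finite_A sub by (simp only: sum_of_bool_eq Collect_mem_eq Int_absorb1)
  finally show ?thesis .
qed

lemma Lambda3_top_up_close:
  assumes X: "(ap3_defect X)\<^sup>2 \<le> 27 * (real p ^ n) ^ 3"
    and Z: "{m \<in> V p n. X m} \<subseteq> Z" "Z \<subseteq> V p n" "card (Z - {m \<in> V p n. X m}) \<le> 3 * sqrt (real p ^ n)"
  shows "\<bar>Lambda3 p n (\<lambda>m. of_bool (m \<in> Z)) - Lambda3 p n j\<bar> \<le> 16 * real p powr (- real n / 3)"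
proof -
  define s where "s = sqrt (real p ^ n)"
  have s: "1 \<le> s" "real p ^ n = s\<^sup>2" using p_pos by (auto simp: s_def)
  have "\<bar>Lambda3 p n (\<lambda>m. of_bool (m \<in> Z)) - Lambda3 p n (\<lambda>m. of_bool (X m))\<bar>
      \<le> 3 * card (Z - {m \<in> V p n. X m}) / real p ^ n"
    using Lambda3_diff_le[OF prime_p odd_p,
        where n = n and g = "\<lambda>m. of_bool (m \<in> Z)" and h = "\<lambda>m. of_bool (X m)"]
    by (simp add: sum_abs_top_up_diff[OF Z(1,2)])
  also have "\<dots> \<le> 9 / s"
    using Z(3) s by (simp add: s_def[symmetric] power2_eq_square field_simps)
  finally have "\<bar>Lambda3 p n (\<lambda>m. of_bool (m \<in> Z)) - Lambda3 p n j\<bar> \<le> 9 / s + 7 / s"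
    using Lambda3_indicator_close[OF X] unfolding s_def by linarith
  also have "\<dots> = 16 * real p powr (- (real n / 2))"
    using p_pos by (simp add: s_def powr_minus_divide powr_half_sqrt_powr powr_realpow[symmetric])
  also have "\<dots> \<le> 16 * real p powr (- real n / 3)"
    using prime_gt_1_nat[OF prime_p] by (intro mult_left_mono powr_mono) auto
  finally show ?thesis .
qed

lemma avgW_top_up_diff_le:
  assumes Z: "{m \<in> V p n. X m} \<subseteq> Z" "Z \<subseteq> V p n" "card (Z - {m \<in> V p n. X m}) \<le> 3 * sqrt (real p ^ n)"
    and W: "is_subspace p n W" and m: "m \<in> V p n"
  shows "\<bar>avgW p W (\<lambda>m. of_bool (m \<in> Z)) m - avgW p W (\<lambda>m. of_bool (X m)) m\<bar>
    \<le> 3 * (sqrt (real p ^ n) / card W)"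
proof -
  have "\<bar>avgW p W (\<lambda>m. of_bool (m \<in> Z)) m - avgW p W (\<lambda>m. of_bool (X m)) m\<bar>
      \<le> card (Z - {m \<in> V p n. X m}) / card W"
    using avgW_diff_le[OF p_pos W m, where g = "\<lambda>m. of_bool (m \<in> Z)" and h = "\<lambda>m. of_bool (X m)"]
    by (simp add: sum_abs_top_up_diff[OF Z(1,2)])
  also have "\<dots> \<le> 3 * (sqrt (real p ^ n) / card W)"
    using Z(3) by (simp add: divide_right_mono)
  finally show ?thesis .
qed

lemma avgW_top_up_close:
  assumes X: "autocorr_energy p n (centred X) \<le> 6"
    and Z: "{m \<in> V p n. X m} \<subseteq> Z" "Z \<subseteq> V p n" "card (Z - {m \<in> V p n. X m}) \<le> 3 * sqrt (real p ^ n)"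
    and n: "real n \<ge> 36" "real n ^ 4 * 3 powr (3 * sqrt (real n) - real n / 2) \<le> 1"
    and W: "is_subspace p n W" "codim p n W \<le> sqrt (real n)" and m: "m \<in> V p n"
  shows "\<bar>avgW p W (\<lambda>m. of_bool (m \<in> Z)) m - avgW p W j m\<bar> \<le> 16 / real n"
proof -
  define E where "E = 3 powr (3 * sqrt (real n) - real n / 2)"
  have p3: "p \<ge> 3"
    using prime_ge_2_nat[OF prime_p] odd_p by (cases "p = 2") auto
  have E: "E \<le> 1 / real n ^ 4"
    using n by (simp add: E_def field_simps mult.commute)
  have "real n \<le> real n ^ 4"
    using n(1) power_increasing[of 1 4 "real n"] by simp
  hence "3 * real n \<le> 8 * real n ^ 4"
    using n(1) by linarith
  hence "3 / real n ^ 4 \<le> 8 / real n"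
    using n(1) by (simp add: field_simps)
  hence close_Z: "\<bar>avgW p W (\<lambda>m. of_bool (m \<in> Z)) m - avgW p W (\<lambda>m. of_bool (X m)) m\<bar> \<le> 8 / real n"
    using avgW_top_up_diff_le[OF Z W(1) m] subspace_ratios_le(1)[OF p3 n(1) W] E
    by (simp add: E_def)
  have "\<bar>avgW p W (\<lambda>m. of_bool (X m)) m - avgW p W j m\<bar> ^ 4 \<le> 6 * ((real p ^ n)\<^sup>2 / card W ^ 3)"
    by (rule avgW_indicator_close_pow4[OF X W(1) m])
  also have "\<dots> \<le> 6 / real n ^ 4"
    using subspace_ratios_le(2)[OF p3 n(1) W] E by (simp add: E_def)
  also have "\<dots> \<le> (8 / real n) ^ 4"
    using n(1) by (simp add: power_divide divide_right_mono)
  finally have "\<bar>avgW p W (\<lambda>m. of_bool (X m)) m - avgW p W j m\<bar> \<le> 8 / real n"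
    by (rule power_le_imp_le_base[of _ 3, simplified]) (use n(1) in simp)
  thus ?thesis using close_Z by linarith
qed

lemma exists_indicator_approximation:
  assumes "real n \<ge> 36" "real n ^ 4 * 3 powr (3 * sqrt (real n) - real n / 2) \<le> 1"
  shows "\<exists>j2 :: (nat \<Rightarrow> nat) \<Rightarrow> real.
    (\<forall>m\<in>V p n. j2 m = 0 \<or> j2 m = 1) \<and> Ex p n j2 \<ge> Ex p n j \<and>
    \<bar>Lambda3 p n j2 - Lambda3 p n j\<bar> \<le> 16 * real p powr (- real n / 3) \<and>
    (\<forall>W. is_subspace p n W \<and> codim p n W \<le> sqrt (real n) \<longrightarrow>
       (\<forall>m\<in>V p n. \<bar>avgW p W j2 m - avgW p W j m\<bar> \<le> 16 / real n))"
proof -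
  obtain X where X: "autocorr_energy p n (centred X) \<le> 6" "(ap3_defect X)\<^sup>2 \<le> 27 * (real p ^ n) ^ 3"
    "(\<Sum>m\<in>V p n. centred X m)\<^sup>2 \<le> 3 * real p ^ n"
    using exists_good_outcome by blast
  then obtain Z where Z: "{m \<in> V p n. X m} \<subseteq> Z" "Z \<subseteq> V p n" "(\<Sum>m\<in>V p n. j m) \<le> card Z"
    "card (Z - {m \<in> V p n. X m}) \<le> 3 * sqrt (real p ^ n)"
    using exists_top_up by blast
  have "Ex p n j \<le> Ex p n (\<lambda>m. of_bool (m \<in> Z))"
    using Z(2,3) finite_A by (simp add: Ex_def Int_absorb1 divide_right_mono)
  thus ?thesis
    using Lambda3_top_up_close[OF X(2) Z(1,2,4)] avgW_top_up_close[OF X(1) Z(1,2,4) assms]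
    by (intro exI[of _ "\<lambda>m. of_bool (m \<in> Z)"]) auto
qed

end

theorem lemma1:
  fixes p :: nat
  assumes "prime p" and "odd p"
  shows "\<exists>C::real. \<exists>N::nat. \<forall>n\<ge>N. \<forall>j :: (nat \<Rightarrow> nat) \<Rightarrow> real.
    (\<forall>m\<in>V p n. 0 \<le> j m \<and> j m \<le> 1) \<longrightarrow>
    (\<exists>j2 :: (nat \<Rightarrow> nat) \<Rightarrow> real.
       (\<forall>m\<in>V p n. j2 m = 0 \<or> j2 m = 1) \<and>
       Ex p n j2 \<ge> Ex p n j \<and>
       \<bar>Lambda3 p n j2 - Lambda3 p n j\<bar> \<le> C * real p powr (- real n / 3) \<and>
       (\<forall>W. is_subspace p n W \<and> codim p n W \<le> sqrt (real n) \<longrightarrow>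
          (\<forall>m\<in>V p n. \<bar>avgW p W j2 m - avgW p W j m\<bar> \<le> C / real n)))"
proof -
  have "(\<lambda>n::nat. real n ^ 4 * 3 powr (3 * sqrt (real n) - real n / 2)) \<longlonglongrightarrow> 0"
    by real_asymp
  hence "eventually (\<lambda>n. real n ^ 4 * 3 powr (3 * sqrt (real n) - real n / 2) < 1) sequentially"
    by (rule order_tendstoD(2)) simp
  then obtain N0 where N0: "\<And>n. n \<ge> N0 \<Longrightarrow> real n ^ 4 * 3 powr (3 * sqrt (real n) - real n / 2) \<le> 1"
    unfolding eventually_sequentially by (meson less_imp_le)
  have "random_subset p n j" if "\<forall>m\<in>V p n. 0 \<le> j m \<and> j m \<le> 1" for n j
    using that assms finite_V[OF prime_gt_0_nat[OF assms(1)]] by unfold_locales auto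
  with N0 show ?thesis
    by (intro exI[of _ 16] exI[of _ "max N0 36"] allI impI random_subset.exists_indicator_approximation) auto
qed

end
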